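(* Let $S\in\mathbb{Z}_{\ge 0}^{n\times n_s}$ and $T\in\mathbb{Z}_{\ge0}^{n\times n_t}$, and let $\mathcal{C}=\{M\in\mathbb{Z}_{\ge0}^{n_s\times n_t} : SM=T\}$, assumed nonempty. Let $\mathcal{F}=\{x\in\mathbb{Z}_{\ge0}^{1\times n_s} : |\{xM : M\in\mathcal{C}\}|=1\}$. Let $x$ be any input (row vector in $\mathbb{Z}_{\ge0}^{1\times n_s}$), let $v\sim\mathcal{N}(0,I_{n_t\times n_t})$ be a random vector, and let $a=\min_{M\in\mathcal{C}} xMv$ and $b=\max_{M\in\mathcal{C}} xMv$. Then with probability 1, $a=b$ if and only if $x\in\mathcal{F}$.
   Context: Each training input (a bag of source atoms over $n_s$ atom types) is encoded as a row vector of counts, forming the rows of $S$; the corresponding outputs (bags over $n_t$ target atom types) form the rows of $T$. A mapping is a nonnegative integer matrix $M$ whose entry $M_{st}$ is the number of copies of target atom $t$ that source atom $s$ maps to; the output on input $x$ is $xM$. Nonemptiness of $\mathcal{C}$ reflects the standing assumption that the training data are noiseless outputs of a true mapping $M^*$. *)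

theory Defs
  imports "HOL-Probability.Probability"
begin

text \<open>Training inputs: rows of S (indexed by 'r, atom types 's); outputs: rows of T
  (atom types 't). A mapping M :: nat^'t^'s; output on input x is x v* M.\<close>

definition consistent_maps ::
  "nat ^ 's ^ 'r \<Rightarrow> nat ^ 't ^ 'r \<Rightarrow> (nat ^ 't ^ 's) set" where
  "consistent_maps S T = {M. S ** M = T}"

definition determined_inputs ::
  "nat ^ 's ^ 'r \<Rightarrow> nat ^ 't ^ 'r \<Rightarrow> (nat ^ 's) set" where
  "determined_inputs S T = {x. card ((\<lambda>M. x v* M) ` consistent_maps S T) = 1}"

definition std_gaussian_vector :: "('t::finite \<Rightarrow> real) measure" where
  "std_gaussian_vector = PiM UNIV (\<lambda>_. std_normal_distribution)"

definition score :: "nat ^ 's \<Rightarrow> nat ^ 't ^ 's \<Rightarrow> ('t \<Rightarrow> real) \<Rightarrow> real" where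
  "score x M v = (\<Sum>t\<in>UNIV. real ((x v* M) $ t) * v t)"

end

theory Submission
  imports Defs
begin

text \<open>For distinct u, w the event that the Gaussian vector v satisfies u \<bullet> v = w \<bullet> v is an
  affine hyperplane, which is null because the coordinates of v are independent and atomless.
  There are only countably many output vectors xM, so almost surely M \<mapsto> xMv separates all
  distinct outputs; then the infimum and supremum of the scores coincide exactly when there is
  only one output.\<close>

lemma emeasure_std_normal_singleton: "emeasure std_normal_distribution {a} = 0"
proof -
  have "AE y in lborel. y \<in> {a} \<longrightarrow> std_normal_density y = 0"
    by (rule eventually_mono[OF AE_lborel_singleton[of a]]) simp
  then have "{a} \<in> null_sets (density lborel std_normal_density)"
    by (subst null_sets_density_iff) simp_all
  then show ?thesis by auto
qed

lemma AE_PiM_linear_form_neq: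
  fixes c :: "'t::finite \<Rightarrow> real" and N :: "real measure"
  assumes "prob_space N" and sets_N: "sets N = sets borel"
    and atomless: "\<And>a. emeasure N {a} = 0" and "c t0 \<noteq> 0"
  shows "AE v in PiM UNIV (\<lambda>_. N). (\<Sum>t\<in>UNIV. c t * v t) \<noteq> d"
proof -
  interpret product_prob_space "\<lambda>_::'t. N"
    using \<open>prob_space N\<close> by (simp add: product_prob_space_def product_sigma_finite_def
        prob_space_imp_sigma_finite product_prob_space_axioms_def)
  define H where "H = {v \<in> space (PiM UNIV (\<lambda>_. N)). (\<Sum>t\<in>UNIV. c t * v t) = d}"
  have "(\<lambda>v. v t) \<in> borel_measurable (PiM UNIV (\<lambda>_. N))" for t
    using measurable_component_singleton[OF UNIV_I, of t "\<lambda>_. N"]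
    by (simp add: measurable_cong_sets[OF refl sets_N])
  then have H_sets: "H \<in> sets (PiM UNIV (\<lambda>_. N))"
    unfolding H_def by measurable
  have UNIV_eq: "(UNIV::'t set) = insert t0 (UNIV - {t0})" by auto
  define a where "a x = (d - (\<Sum>t\<in>UNIV - {t0}. c t * x t)) / c t0" for x :: "'t \<Rightarrow> real"
  have indicator_slice: "indicator H (x(t0 := y)) = (indicator {a x} y :: ennreal)"
    if "x \<in> space (PiM (UNIV - {t0}) (\<lambda>_. N))" for x y
  proof -
    have "(\<Sum>t\<in>UNIV. c t * (x(t0 := y)) t) = c t0 * y + (\<Sum>t\<in>UNIV - {t0}. c t * x t)"
      by (subst UNIV_eq, subst sum.insert) (auto intro!: sum.cong)
    then have "x(t0 := y) \<in> H \<longleftrightarrow> y = a x"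
      using \<open>c t0 \<noteq> 0\<close> sets_eq_imp_space_eq[OF sets_N]
      by (auto simp: H_def a_def field_simps space_PiM)
    then show ?thesis by (auto simp: indicator_def)
  qed
  have "emeasure (PiM UNIV (\<lambda>_. N)) H = (\<integral>\<^sup>+ v. indicator H v \<partial>PiM (insert t0 (UNIV - {t0})) (\<lambda>_. N))"
    using H_sets UNIV_eq by simp
  also have "\<dots> = (\<integral>\<^sup>+ x. (\<integral>\<^sup>+ y. indicator H (x(t0 := y)) \<partial>N) \<partial>PiM (UNIV - {t0}) (\<lambda>_. N))"
    by (rule product_nn_integral_insert) (use H_sets UNIV_eq in auto)
  also have "\<dots> = (\<integral>\<^sup>+ x. emeasure N {a x} \<partial>PiM (UNIV - {t0}) (\<lambda>_. N))"
    using sets_N by (intro nn_integral_cong) (simp add: indicator_slice)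
  also have "\<dots> = 0"
    by (simp add: atomless)
  finally have "H \<in> null_sets (PiM UNIV (\<lambda>_. N))" using H_sets by auto
  then show ?thesis
    by (rule AE_I') (auto simp: H_def)
qed

lemma AE_std_gaussian_inj_on_linear_form:
  fixes U :: "('t::finite \<Rightarrow> real) set"
  assumes "countable U"
  shows "AE v in std_gaussian_vector. inj_on (\<lambda>u. \<Sum>t\<in>UNIV. u t * v t) U"
proof -
  have "AE v in std_gaussian_vector. (\<Sum>t\<in>UNIV. u t * v t) \<noteq> (\<Sum>t\<in>UNIV. w t * v t)"
    if "u \<noteq> w" for u w
  proof -
    obtain t0 where "u t0 - w t0 \<noteq> 0" using \<open>u \<noteq> w\<close> by (auto simp: fun_eq_iff)
    then have "AE v in std_gaussian_vector. (\<Sum>t\<in>UNIV. (u t - w t) * v t) \<noteq> 0"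
      unfolding std_gaussian_vector_def
      by (intro AE_PiM_linear_form_neq)
        (simp_all add: prob_space_normal_density emeasure_std_normal_singleton)
    then show ?thesis
      by (simp add: left_diff_distrib sum_subtractf)
  qed
  then have "AE v in std_gaussian_vector. \<forall>(u, w)\<in>U \<times> U.
      u \<noteq> w \<longrightarrow> (\<Sum>t\<in>UNIV. u t * v t) \<noteq> (\<Sum>t\<in>UNIV. w t * v t)"
    using \<open>countable U\<close> by (subst AE_ball_countable) auto
  then show ?thesis
    by eventually_elim (auto simp: inj_on_def)
qed

lemma Inf_eq_Sup_iff_card_eq_1:
  fixes A :: "'a::complete_lattice set"
  assumes "A \<noteq> {}"
  shows "Inf A = Sup A \<longleftrightarrow> card A = 1"
proof
  assume Inf_eq_Sup: "Inf A = Sup A"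
  obtain a where "a \<in> A" using assms by blast
  have "b = a" if "b \<in> A" for b
    using Inf_lower[OF that] Sup_upper[OF that] Inf_lower[OF \<open>a \<in> A\<close>] Sup_upper[OF \<open>a \<in> A\<close>]
    by (simp add: Inf_eq_Sup order_antisym)
  then have "A = {a}" using \<open>a \<in> A\<close> by blast
  then show "card A = 1" by simp
qed (auto simp: card_1_singleton_iff)

theorem proposition2:
  fixes S :: "nat ^ 's::finite ^ 'r::finite" and T :: "nat ^ 't::finite ^ 'r"
    and x :: "nat ^ 's"
  assumes "consistent_maps S T \<noteq> {}"
  shows "AE v in std_gaussian_vector.
           (Inf ((\<lambda>M. ereal (score x M v)) ` consistent_maps S T)
              = Sup ((\<lambda>M. ereal (score x M v)) ` consistent_maps S T))
           \<longleftrightarrow> x \<in> determined_inputs S T"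
proof -
  define outputs where "outputs = (\<lambda>M. x v* M) ` consistent_maps S T"
  define real_vec where "real_vec w = (\<lambda>t. real (w $ t))" for w :: "nat ^ 't"
  have "inj real_vec" by (auto intro!: injI simp: real_vec_def vec_eq_iff fun_eq_iff)
  have scores: "(\<lambda>M. ereal (score x M v)) ` consistent_maps S T
      = (\<lambda>u. ereal (\<Sum>t\<in>UNIV. u t * v t)) ` real_vec ` outputs" for v
    by (simp add: outputs_def real_vec_def score_def image_image)
  have "countable (real_vec ` outputs)" by simp
  from AE_std_gaussian_inj_on_linear_form[OF this] show ?thesis
  proof eventually_elim
    case (elim v)
    then have "inj_on (\<lambda>u. ereal (\<Sum>t\<in>UNIV. u t * v t)) (real_vec ` outputs)"
      by (simp add: inj_on_def)
    then have "card ((\<lambda>u. ereal (\<Sum>t\<in>UNIV. u t * v t)) ` real_vec ` outputs) = card outputs"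
      using \<open>inj real_vec\<close> by (simp add: card_image inj_on_subset)
    then show ?case
      using assms unfolding scores
      by (simp add: Inf_eq_Sup_iff_card_eq_1 determined_inputs_def outputs_def)
  qed
qed

end
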